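(* Let $k\in\mathbb{R}$, $r\in(0,\tfrac12\operatorname{diam}S^n_k]$, and let $D^n_k(r)\subset S^n_k$ be a closed disk of radius $r$. Let $\tilde p\in D^n_k(r)$ and $\tilde q\in\partial D^n_k(r)$ be points on a geodesic through the center of $D^n_k(r)$. Define $f:S^n_k\setminus\{\tilde q\}\to\mathbb{R}$ by $f(\tilde x)=\frac{m_k(|\tilde p\tilde x|)-m_k(|\tilde p\tilde q|)}{m_k(|\tilde q\tilde x|)}$. Then (1) $f(\tilde x)=\frac{m_k'(r-|\tilde p\tilde q|)}{m_k'(r)}$ for all $\tilde x\in\partial D^n_k(r)\setminus\{\tilde q\}$; and (2) if $B^n_k(r)$ denotes the interior of $D^n_k(r)$, then $f|_{B^n_k(r)}<\frac{m_k'(r-|\tilde p\tilde q|)}{m_k'(r)}<f|_{S^n_k\setminus D^n_k(r)}$.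
   Context: $S^n_k$ is the simply connected complete $n$-manifold of constant curvature $k$, $\operatorname{diam}S^n_k=\pi/\sqrt k$ if $k>0$ and $\infty$ otherwise; $|\tilde x\tilde y|$ is its distance. $m_k$ is the solution of $y''+ky=1$, $y(0)=y'(0)=0$: $m_k(t)=\frac1k(1-\cos\sqrt k t)$ ($k>0$), $t^2/2$ ($k=0$), $\frac1{|k|}(\cosh\sqrt{|k|}t-1)$ ($k<0$). Thus $\frac{m_k'(r-|\tilde p\tilde q|)}{m_k'(r)}$ equals $\sin(\sqrt k(r-|\tilde p\tilde q|))/\sin(\sqrt k r)$, $(r-|\tilde p\tilde q|)/r$, or $\sinh(\sqrt{|k|}(r-|\tilde p\tilde q|))/\sinh(\sqrt{|k|}r)$ according as $k>0,=0,<0$. *)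

theory Defs
  imports "HOL-Analysis.Analysis"
begin

text \<open>Concrete models of the space form S^n_k inside R^(n+1) = (real^'n) x real.
  k > 0: round sphere of radius 1/sqrt k;  k = 0: the hyperplane t = 0 (Euclidean R^n);
  k < 0: upper sheet of the hyperboloid in Minkowski space.\<close>

definition lor :: "((real^'n) \<times> real) \<Rightarrow> ((real^'n) \<times> real) \<Rightarrow> real" where
  "lor p q = fst p \<bullet> fst q - snd p * snd q"

definition space_form :: "real \<Rightarrow> ((real^'n) \<times> real) set" where
  "space_form k =
     (if k > 0 then {p. p \<bullet> p = 1 / k}
      else if k = 0 then {p. snd p = 0}
      else {p. lor p p = 1 / k \<and> snd p > 0})"

definition sf_dist :: "real \<Rightarrow> ((real^'n) \<times> real) \<Rightarrow> ((real^'n) \<times> real) \<Rightarrow> real" where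
  "sf_dist k p q =
     (if k > 0 then arccos (k * (p \<bullet> q)) / sqrt k
      else if k = 0 then dist p q
      else arcosh (k * lor p q) / sqrt (- k))"

definition sf_geodesic :: "real \<Rightarrow> (real \<Rightarrow> (real^'n) \<times> real) \<Rightarrow> bool" where
  "sf_geodesic k \<gamma> \<longleftrightarrow> (\<exists>c v. c \<in> space_form k \<and>
     (if k > 0 then c \<bullet> v = 0 \<and> v \<bullet> v = 1 \<and>
         \<gamma> = (\<lambda>s. cos (sqrt k * s) *\<^sub>R c + (sin (sqrt k * s) / sqrt k) *\<^sub>R v)
      else if k = 0 then snd v = 0 \<and> v \<bullet> v = 1 \<and> \<gamma> = (\<lambda>s. c + s *\<^sub>R v)
      else lor c v = 0 \<and> lor v v = 1 \<and>
         \<gamma> = (\<lambda>s. cosh (sqrt (- k) * s) *\<^sub>R c + (sinh (sqrt (- k) * s) / sqrt (- k)) *\<^sub>R v)))"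

text \<open>m_k: solution of y'' + k y = 1, y(0) = y'(0) = 0.\<close>
definition m_k :: "real \<Rightarrow> real \<Rightarrow> real" where
  "m_k k t =
     (if k > 0 then (1 - cos (sqrt k * t)) / k
      else if k = 0 then t\<^sup>2 / 2
      else (cosh (sqrt (- k) * t) - 1) / (- k))"

end

theory Submission
  imports Defs
begin

text \<open>The points \<open>c\<close>, \<open>p\<close>, \<open>q\<close> lie on one geodesic, and in the ambient model three points
  of a geodesic are linearly dependent, with coefficients given by the generalised sine
  \<open>m\<^sub>k'\<close>. Comparing distances along the geodesic (this is where \<open>r \<le> diam/2\<close> enters) turns
  the dependence into \<open>p - R q = \<mu> c\<close> with \<open>\<mu> = m\<^sub>k'(|pq|) / m\<^sub>k'(r) > 0\<close>. In the curved models
  \<open>m\<^sub>k(|xy|) = 1/k - \<langle>x, y\<rangle>\<close> for the ambient Euclidean or Lorentzian product, in the flat model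
  \<open>m\<^sub>k(|xy|) = |x - y|\<^sup>2/2\<close> and \<open>\<mu> = 1 - R\<close>; either way the relation yields
  \<open>m\<^sub>k(|px|) - m\<^sub>k(|pq|) - R m\<^sub>k(|qx|) = \<mu> (m\<^sub>k(|cx|) - m\<^sub>k(r))\<close>. Hence \<open>f x - R\<close> has the sign
  of \<open>|cx| - r\<close>, as \<open>m\<^sub>k\<close> is increasing up to the diameter.\<close>

lemma lor_commute: "lor x y = lor y x"
  by (simp add: lor_def inner_commute mult.commute)

lemma lor_add_left: "lor (x + y) z = lor x z + lor y z"
  and lor_add_right: "lor z (x + y) = lor z x + lor z y"
  and lor_diff_left: "lor (x - y) z = lor x z - lor y z"
  and lor_diff_right: "lor z (x - y) = lor z x - lor z y"
  and lor_scaleR_left: "lor (a *\<^sub>R x) z = a * lor x z"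
  and lor_scaleR_right: "lor z (a *\<^sub>R x) = a * lor z x"
  by (simp_all add: lor_def inner_add_left inner_add_right inner_diff_left inner_diff_right
      algebra_simps)

lemmas lor_simps = lor_add_left lor_add_right lor_diff_left lor_diff_right
  lor_scaleR_left lor_scaleR_right

lemma space_form_sphere: "k > 0 \<Longrightarrow> x \<in> space_form k \<longleftrightarrow> x \<bullet> x = 1 / k"
  and space_form_hyperboloid: "k < 0 \<Longrightarrow> x \<in> space_form k \<longleftrightarrow> lor x x = 1 / k \<and> snd x > 0"
  by (simp_all add: space_form_def)

lemma sphere_inner_abs_le:
  assumes "k > 0" "x \<in> space_form k" "y \<in> space_form k"
  shows "\<bar>k * (x \<bullet> y)\<bar> \<le> 1"
proof -
  have "norm x = sqrt (1 / k)" "norm y = sqrt (1 / k)"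
    using assms by (simp_all add: space_form_sphere norm_eq_sqrt_inner)
  then have "\<bar>x \<bullet> y\<bar> \<le> 1 / k"
    using Cauchy_Schwarz_ineq2[of x y] assms(1) by simp
  then show ?thesis using assms(1) by (simp add: abs_mult field_simps)
qed

text \<open>The reverse Cauchy--Schwarz inequality on the upper sheet of the hyperboloid.\<close>
lemma hyperboloid_lor_diff_pos:
  fixes x y :: "(real^'n) \<times> real"
  assumes k: "k < 0" and x: "x \<in> space_form k" and y: "y \<in> space_form k" and "x \<noteq> y"
  shows "lor (x - y) (x - y) > 0"
proof -
  obtain X a where x_eq: "x = (X, a)" by (cases x)
  obtain Y b where y_eq: "y = (Y, b)" by (cases y)
  define A where "A = - 1 / k"
  have A: "A > 0" using k by (simp add: A_def)
  have a: "a > 0" and b: "b > 0" using x y k x_eq y_eq by (auto simp: space_form_hyperboloid)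
  have XX: "X \<bullet> X = a\<^sup>2 - A" and YY: "Y \<bullet> Y = b\<^sup>2 - A"
    using x y k x_eq y_eq by (auto simp: space_form_hyperboloid lor_def A_def power2_eq_square)
  have "A \<le> a\<^sup>2" "A \<le> b\<^sup>2" using XX YY by (metis diff_ge_0_iff_ge inner_ge_zero)+
  then have "sqrt A \<le> a" "sqrt A \<le> b" using a b by (auto intro: real_le_lsqrt)
  then have "sqrt A * sqrt A \<le> a * b" using A a by (intro mult_mono) auto
  then have ab: "A \<le> a * b" using A by simp
  have XY: "X \<bullet> Y \<le> sqrt ((a\<^sup>2 - A) * (b\<^sup>2 - A))"
    using Cauchy_Schwarz_ineq2[of X Y] by (simp add: norm_eq_sqrt_inner XX YY real_sqrt_mult)
  have lor_eq: "lor (x - y) (x - y) = a\<^sup>2 - A + (b\<^sup>2 - A) - 2 * (X \<bullet> Y) - (a - b)\<^sup>2"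
    using XX YY x_eq y_eq
    by (simp add: lor_def inner_diff_left inner_diff_right inner_commute power2_eq_square)
  have sq: "(a * b - A)\<^sup>2 = (a\<^sup>2 - A) * (b\<^sup>2 - A) + A * (a - b)\<^sup>2"
    by (simp add: power2_eq_square algebra_simps)
  show ?thesis
  proof (cases "a = b")
    case True
    then have "X \<noteq> Y" using \<open>x \<noteq> y\<close> x_eq y_eq by auto
    then show ?thesis using True x_eq y_eq by (simp add: lor_def)
  next
    case False
    have "sqrt ((a\<^sup>2 - A) * (b\<^sup>2 - A)) < sqrt ((a * b - A)\<^sup>2)"
      using sq A False by (intro real_sqrt_less_mono) simp
    then have "sqrt ((a\<^sup>2 - A) * (b\<^sup>2 - A)) < a * b - A" using ab by simp
    then show ?thesis using lor_eq XY by (simp add: power2_eq_square algebra_simps)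
  qed
qed

lemma hyperboloid_lor_ge:
  assumes k: "k < 0" and x: "x \<in> space_form k" and y: "y \<in> space_form k"
  shows "k * lor x y \<ge> 1"
proof -
  have "lor (x - y) (x - y) = 2 / k - 2 * lor x y"
    using x y k by (simp add: space_form_hyperboloid lor_simps lor_commute[of y x])
  moreover have "lor (x - y) (x - y) \<ge> 0"
    using hyperboloid_lor_diff_pos[OF k x y] by (cases "x = y") (auto simp: lor_def)
  ultimately have "lor x y \<le> 1 / k" by simp
  then show ?thesis using k by (simp add: field_simps)
qed

lemma m_k_0: "m_k k 0 = 0"
  by (simp add: m_k_def)

lemma less_diameter_if_le_half:
  assumes "0 < r" "r \<le> pi / (2 * sqrt k)" "k > 0"
  shows "r < pi / sqrt k"
proof -
  have "r * sqrt k * 2 \<le> pi" "0 < r * sqrt k" using assms by (simp_all add: field_simps)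
  then show ?thesis using assms(3) by (simp add: field_simps)
qed

lemma deriv_m_k:
  "deriv (m_k k) t =
     (if k > 0 then sin (sqrt k * t) / sqrt k
      else if k = 0 then t
      else sinh (sqrt (- k) * t) / sqrt (- k))"
proof (cases k "0::real" rule: linorder_cases)
  case less
  define s where "s = sqrt (- k)"
  have s: "s > 0" "s * s = - k" using less by (auto simp: s_def)
  have "m_k k = (\<lambda>t. (cosh (s * t) - 1) / (s * s))"
    using less by (auto simp: m_k_def s_def)
  moreover have "((\<lambda>t. (cosh (s * t) - 1) / (s * s)) has_real_derivative sinh (s * t) / s) (at t)"
    using s(1) by (auto intro!: derivative_eq_intros simp: field_simps)
  ultimately show ?thesis using less by (simp add: DERIV_imp_deriv s_def)
next
  case equal
  have "((\<lambda>t. t\<^sup>2 / 2) has_real_derivative t) (at t)"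
    by (auto intro!: derivative_eq_intros)
  then show ?thesis using equal by (simp add: DERIV_imp_deriv m_k_def [abs_def])
next
  case greater
  define s where "s = sqrt k"
  have s: "s > 0" "s * s = k" using greater by (auto simp: s_def)
  have "m_k k = (\<lambda>t. (1 - cos (s * t)) / (s * s))"
    using greater by (auto simp: m_k_def s_def)
  moreover have "((\<lambda>t. (1 - cos (s * t)) / (s * s)) has_real_derivative sin (s * t) / s) (at t)"
    using s(1) by (auto intro!: derivative_eq_intros simp: field_simps)
  ultimately show ?thesis using greater by (simp add: DERIV_imp_deriv s_def)
qed

lemma deriv_m_k_pos:
  assumes "0 < t" "k > 0 \<Longrightarrow> t < pi / sqrt k"
  shows "deriv (m_k k) t > 0"
proof (cases k "0::real" rule: linorder_cases)
  case greater
  then have "sqrt k * t < pi" using assms by (simp add: field_simps)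
  then show ?thesis using greater assms by (simp add: deriv_m_k sin_gt_zero)
qed (use assms in \<open>simp_all add: deriv_m_k\<close>)

lemma m_k_less_iff:
  assumes "0 \<le> s" "0 \<le> t" "k > 0 \<Longrightarrow> s \<le> pi / sqrt k \<and> t \<le> pi / sqrt k"
  shows "m_k k s < m_k k t \<longleftrightarrow> s < t"
proof (cases k "0::real" rule: linorder_cases)
  case less
  then have "m_k k s < m_k k t \<longleftrightarrow> cosh (sqrt (- k) * s) < cosh (sqrt (- k) * t)"
    by (simp add: m_k_def divide_less_cancel)
  also have "\<dots> \<longleftrightarrow> s < t"
    using assms less by (simp add: cosh_real_nonneg_less_iff)
  finally show ?thesis .
next
  case equal
  have "s\<^sup>2 \<le> t\<^sup>2 \<longleftrightarrow> s \<le> t" "t\<^sup>2 \<le> s\<^sup>2 \<longleftrightarrow> t \<le> s"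
    using assms by simp_all
  then show ?thesis using equal by (simp add: m_k_def not_le[symmetric])
next
  case greater
  have "s * sqrt k \<le> pi" "t * sqrt k \<le> pi"
    using assms greater by (simp_all add: pos_le_divide_eq)
  then have "sqrt k * s \<le> pi" "sqrt k * t \<le> pi" by (simp_all add: mult.commute)
  from greater have "m_k k s < m_k k t \<longleftrightarrow> cos (sqrt k * t) < cos (sqrt k * s)"
    by (simp add: m_k_def divide_less_cancel)
  also have "\<dots> \<longleftrightarrow> s < t"
    using assms greater \<open>sqrt k * s \<le> pi\<close> \<open>sqrt k * t \<le> pi\<close> by (simp add: cos_mono_less_eq)
  finally show ?thesis .
qed

lemma m_k_sf_dist:
  assumes "x \<in> space_form k" "y \<in> space_form k"
  shows "m_k k (sf_dist k x y) =
           (if k > 0 then 1 / k - x \<bullet> y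
            else if k = 0 then (dist x y)\<^sup>2 / 2
            else 1 / k - lor x y)"
proof (cases k "0::real" rule: linorder_cases)
  case less
  then have "cosh (arcosh (k * lor x y)) = k * lor x y"
    using hyperboloid_lor_ge[OF less assms] by simp
  then show ?thesis using less by (simp add: m_k_def sf_dist_def field_simps)
next
  case equal
  then show ?thesis by (simp add: m_k_def sf_dist_def)
next
  case greater
  then have "cos (arccos (k * (x \<bullet> y))) = k * (x \<bullet> y)"
    using sphere_inner_abs_le[OF greater assms] by (simp add: cos_arccos_abs)
  then show ?thesis using greater by (simp add: m_k_def sf_dist_def field_simps)
qed

lemma m_k_sf_dist_pos:
  fixes x y :: "(real^'n) \<times> real"
  assumes x: "x \<in> space_form k" and y: "y \<in> space_form k" and "x \<noteq> y"
  shows "m_k k (sf_dist k x y) > 0"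
proof (cases k "0::real" rule: linorder_cases)
  case less
  have "lor (x - y) (x - y) = 2 * (1 / k - lor x y)"
    using x y less by (simp add: space_form_hyperboloid lor_simps lor_commute[of y x])
  then show ?thesis
    using hyperboloid_lor_diff_pos[OF less x y \<open>x \<noteq> y\<close>] less m_k_sf_dist[OF x y] by simp
next
  case equal
  then have eq: "m_k k (sf_dist k x y) = (dist x y)\<^sup>2 / 2" using m_k_sf_dist[OF x y] by simp
  show ?thesis unfolding eq using \<open>x \<noteq> y\<close> by simp
next
  case greater
  have "0 < (x - y) \<bullet> (x - y)" using \<open>x \<noteq> y\<close> by simp
  also have "\<dots> = 2 * (1 / k - x \<bullet> y)"
    using x y greater by (simp add: space_form_sphere inner_diff_left inner_diff_right inner_commute)
  finally show ?thesis using greater m_k_sf_dist[OF x y] by simp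
qed

lemma sf_dist_nonneg:
  assumes "x \<in> space_form k" "y \<in> space_form k"
  shows "sf_dist k x y \<ge> 0"
proof (cases k "0::real" rule: linorder_cases)
  case less
  then show ?thesis using hyperboloid_lor_ge[OF less assms] by (simp add: sf_dist_def)
next
  case greater
  then show ?thesis
    using sphere_inner_abs_le[OF greater assms] by (simp add: sf_dist_def arccos_lbound abs_le_iff)
qed (simp add: sf_dist_def)

lemma sf_dist_le_diameter:
  assumes "k > 0" "x \<in> space_form k" "y \<in> space_form k"
  shows "sf_dist k x y \<le> pi / sqrt k"
proof -
  have "arccos (k * (x \<bullet> y)) \<le> pi"
    using sphere_inner_abs_le[OF assms] by (simp add: arccos_ubound abs_le_iff)
  then show ?thesis using assms(1) by (simp add: sf_dist_def divide_right_mono)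
qed

lemma m_k_sf_dist_combination:
  fixes p q c x :: "(real^'n) \<times> real"
  assumes p: "p \<in> space_form k" and q: "q \<in> space_form k"
    and c: "c \<in> space_form k" and x: "x \<in> space_form k"
    and pq: "p - R *\<^sub>R q = \<mu> *\<^sub>R c" and affine: "k = 0 \<Longrightarrow> \<mu> = 1 - R"
  shows "m_k k (sf_dist k p x) - m_k k (sf_dist k p q) - R * m_k k (sf_dist k q x)
       = \<mu> * (m_k k (sf_dist k c x) - m_k k (sf_dist k c q))"
proof (cases k "0::real" rule: linorder_cases)
  case less
  have "lor q q = 1 / k" using q less by (simp add: space_form_hyperboloid)
  then have "m_k k (sf_dist k p x) - m_k k (sf_dist k p q) - R * m_k k (sf_dist k q x)
      = lor (p - R *\<^sub>R q) (q - x)"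
    using less by (simp add: m_k_sf_dist p q x lor_simps lor_commute algebra_simps)
  then show ?thesis
    using less by (simp add: pq m_k_sf_dist c q x lor_simps algebra_simps)
next
  case equal
  have p_eq: "p = R *\<^sub>R q + (1 - R) *\<^sub>R c" using pq affine[OF equal] by (simp add: algebra_simps)
  show ?thesis
    unfolding m_k_sf_dist[OF p x] m_k_sf_dist[OF p q] m_k_sf_dist[OF q x]
      m_k_sf_dist[OF c x] m_k_sf_dist[OF c q] affine[OF equal]
    using equal
    by (simp add: p_eq dist_norm power2_norm_eq_inner inner_diff_left
        inner_diff_right inner_add_left inner_add_right inner_commute field_simps)
next
  case greater
  have "q \<bullet> q = 1 / k" using q greater by (simp add: space_form_sphere)
  then have "m_k k (sf_dist k p x) - m_k k (sf_dist k p q) - R * m_k k (sf_dist k q x)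
      = (p - R *\<^sub>R q) \<bullet> (q - x)"
    using greater by (simp add: m_k_sf_dist p q x inner_diff_left inner_diff_right inner_commute
        algebra_simps)
  then show ?thesis
    using greater by (simp add: pq m_k_sf_dist c q x inner_diff_right algebra_simps)
qed

lemma m_k_sf_dist_geodesic:
  assumes "sf_geodesic k \<gamma>"
  shows "m_k k (sf_dist k (\<gamma> x) (\<gamma> y)) = m_k k (y - x)"
proof (cases k "0::real" rule: linorder_cases)
  case less
  define s where "s = sqrt (- k)"
  have s: "s > 0" "s * s = - k" using less by (auto simp: s_def)
  obtain c v where c: "lor c c = 1 / k" and cv: "lor c v = 0" and vv: "lor v v = 1"
    and \<gamma>: "\<gamma> = (\<lambda>t. cosh (s * t) *\<^sub>R c + (sinh (s * t) / s) *\<^sub>R v)"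
    using assms less unfolding sf_geodesic_def s_def by (auto simp: space_form_hyperboloid)
  have "lor (\<gamma> x) (\<gamma> y) = cosh (s * x) * cosh (s * y) / k + sinh (s * x) * sinh (s * y) / (s * s)"
    unfolding \<gamma> by (simp add: lor_simps c cv vv lor_commute[of v c] mult.commute)
  also have "\<dots> = cosh (s * x - s * y) / k"
    using s by (simp add: cosh_diff diff_divide_distrib)
  finally have "k * lor (\<gamma> x) (\<gamma> y) = cosh (s * (x - y))"
    using less by (simp add: right_diff_distrib)
  moreover have "arcosh (cosh (s * (x - y))) = \<bar>s * (x - y)\<bar>"
    using arcosh_cosh_real[of "\<bar>s * (x - y)\<bar>"] by simp
  ultimately have "s * sf_dist k (\<gamma> x) (\<gamma> y) = \<bar>s * (x - y)\<bar>"
    using less s(1) by (simp add: sf_dist_def s_def)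
  then show ?thesis
    using less by (simp add: m_k_def s_def abs_mult abs_minus_commute)
next
  case equal
  obtain c v where vv: "v \<bullet> v = 1" and \<gamma>: "\<gamma> = (\<lambda>t. c + t *\<^sub>R v)"
    using assms unfolding sf_geodesic_def equal
    by (simp only: less_irrefl if_False if_True simp_thms) blast
  have "dist (\<gamma> x) (\<gamma> y) = \<bar>x - y\<bar>"
    using vv by (simp add: \<gamma> dist_norm norm_eq_sqrt_inner flip: scaleR_diff_left)
  then show ?thesis using equal by (simp add: sf_dist_def m_k_def power2_commute)
next
  case greater
  define s where "s = sqrt k"
  have s: "s > 0" "s * s = k" using greater by (auto simp: s_def)
  obtain c v where c: "c \<bullet> c = 1 / k" and cv: "c \<bullet> v = 0" and vv: "v \<bullet> v = 1"
    and \<gamma>: "\<gamma> = (\<lambda>t. cos (s * t) *\<^sub>R c + (sin (s * t) / s) *\<^sub>R v)"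
    using assms greater unfolding sf_geodesic_def s_def by (auto simp: space_form_sphere)
  have "\<gamma> x \<bullet> \<gamma> y = cos (s * x) * cos (s * y) / k + sin (s * x) * sin (s * y) / (s * s)"
    unfolding \<gamma> by (simp add: inner_add_left inner_add_right c cv vv inner_commute[of v c]
        mult.commute)
  also have "\<dots> = cos (s * x - s * y) / k"
    using s by (simp add: cos_diff add_divide_distrib)
  finally have "k * (\<gamma> x \<bullet> \<gamma> y) = cos (s * (x - y))"
    using greater by (simp add: right_diff_distrib)
  then have "cos (s * sf_dist k (\<gamma> x) (\<gamma> y)) = cos (s * (x - y))"
    using greater s(1) by (simp add: sf_dist_def s_def cos_arccos_abs)
  then show ?thesis
    using greater by (simp add: m_k_def s_def) (metis cos_minus minus_diff_eq mult_minus_right)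
qed

lemma sin_three_point:
  fixes a b e :: real
  shows "sin (e - a) * sin b - sin (b - a) * sin e = sin (e - b) * sin a"
  unfolding sin_diff by algebra

lemma sin_cos_three_point:
  fixes a b e :: real
  shows "sin (e - a) * cos b - sin (b - a) * cos e = sin (e - b) * cos a"
  unfolding sin_diff by algebra

lemma sinh_three_point:
  fixes a b e :: real
  shows "sinh (e - a) * sinh b - sinh (b - a) * sinh e = sinh (e - b) * sinh a"
  unfolding sinh_diff by algebra

lemma sinh_cosh_three_point:
  fixes a b e :: real
  shows "sinh (e - a) * cosh b - sinh (b - a) * cosh e = sinh (e - b) * cosh a"
  unfolding sinh_diff by algebra

lemma three_point_relation_lincomb:
  fixes c v :: "'a::real_vector"
  assumes "g (e - a) * C b - g (b - a) * C e = g (e - b) * C a"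
    and "g (e - a) * S b - g (b - a) * S e = g (e - b) * S a"
  shows "g (e - a) *\<^sub>R (C b *\<^sub>R c + S b *\<^sub>R v) - g (b - a) *\<^sub>R (C e *\<^sub>R c + S e *\<^sub>R v)
       = g (e - b) *\<^sub>R (C a *\<^sub>R c + S a *\<^sub>R v)"
proof -
  have "g (e - a) *\<^sub>R (C b *\<^sub>R c + S b *\<^sub>R v) - g (b - a) *\<^sub>R (C e *\<^sub>R c + S e *\<^sub>R v)
      = (g (e - a) * C b - g (b - a) * C e) *\<^sub>R c + (g (e - a) * S b - g (b - a) * S e) *\<^sub>R v"
    by (simp add: algebra_simps)
  also have "\<dots> = g (e - b) *\<^sub>R (C a *\<^sub>R c + S a *\<^sub>R v)"
    by (simp add: assms scaleR_add_right)
  finally show ?thesis .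
qed

text \<open>The space-form analogue of \<open>sin (e - a) u b - sin (b - a) u e = sin (e - b) u a\<close> for
  points \<open>u t = (cos t, sin t)\<close> of a circle; \<open>m\<^sub>k'\<close> is the generalised sine.\<close>
lemma sf_geodesic_three_points:
  assumes "sf_geodesic k \<gamma>"
  shows "deriv (m_k k) (e - a) *\<^sub>R \<gamma> b - deriv (m_k k) (b - a) *\<^sub>R \<gamma> e
       = deriv (m_k k) (e - b) *\<^sub>R \<gamma> a"
proof (cases k "0::real" rule: linorder_cases)
  case less
  define s where "s = sqrt (- k)"
  have "s > 0" using less by (simp add: s_def)
  obtain c v where \<gamma>: "\<gamma> = (\<lambda>t. cosh (s * t) *\<^sub>R c + (sinh (s * t) / s) *\<^sub>R v)"
    using assms less unfolding sf_geodesic_def s_def by auto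
  have m': "deriv (m_k k) = (\<lambda>t. sinh (s * t) / s)"
    using less by (intro ext) (simp add: deriv_m_k s_def)
  show ?thesis unfolding m' \<gamma>
    using sinh_cosh_three_point[of "s * e" "s * a" "s * b"] sinh_three_point[of "s * e" "s * a" "s * b"]
      \<open>s > 0\<close>
    by (intro three_point_relation_lincomb) (simp_all add: right_diff_distrib field_simps)
next
  case equal
  obtain c v where \<gamma>: "\<gamma> = (\<lambda>t. c + t *\<^sub>R v)"
    using assms unfolding sf_geodesic_def equal
    by (simp only: less_irrefl if_False if_True simp_thms) blast
  show ?thesis
    using three_point_relation_lincomb[of id e a "\<lambda>_. 1" b "\<lambda>t. t" c v]
    by (simp add: \<gamma> deriv_m_k equal algebra_simps)
next
  case greater
  define s where "s = sqrt k"
  have "s > 0" using greater by (simp add: s_def)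
  obtain c v where \<gamma>: "\<gamma> = (\<lambda>t. cos (s * t) *\<^sub>R c + (sin (s * t) / s) *\<^sub>R v)"
    using assms greater unfolding sf_geodesic_def s_def by auto
  have m': "deriv (m_k k) = (\<lambda>t. sin (s * t) / s)"
    using greater by (intro ext) (simp add: deriv_m_k s_def)
  show ?thesis unfolding m' \<gamma>
    using sin_cos_three_point[of "s * e" "s * a" "s * b"] sin_three_point[of "s * e" "s * a" "s * b"]
      \<open>s > 0\<close>
    by (intro three_point_relation_lincomb) (simp_all add: right_diff_distrib field_simps)
qed

lemma sf_geodesic_three_points_normalized:
  assumes "sf_geodesic k \<gamma>" and "\<bar>\<delta>\<bar> = 1"
    and "deriv (m_k k) (e - a) = \<delta> * A" "deriv (m_k k) (b - a) = \<delta> * B"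
    and "deriv (m_k k) ((e - a) - (b - a)) = \<delta> * C" and "A > 0"
  shows "\<gamma> b - (B / A) *\<^sub>R \<gamma> e = (C / A) *\<^sub>R \<gamma> a"
proof -
  have "\<delta> *\<^sub>R (A *\<^sub>R \<gamma> b - B *\<^sub>R \<gamma> e) = \<delta> *\<^sub>R (C *\<^sub>R \<gamma> a)"
    using sf_geodesic_three_points[OF assms(1), of e a b] assms(3-5) by (simp add: scaleR_diff_right)
  then have "A *\<^sub>R \<gamma> b - B *\<^sub>R \<gamma> e = C *\<^sub>R \<gamma> a"
    using assms(2) by (auto simp del: scaleR_scaleR)
  then have "inverse A *\<^sub>R (A *\<^sub>R \<gamma> b - B *\<^sub>R \<gamma> e) = inverse A *\<^sub>R (C *\<^sub>R \<gamma> a)"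
    by simp
  then show ?thesis using \<open>A > 0\<close> by (simp add: scaleR_diff_right divide_inverse_commute)
qed

lemma abs_collinear_signs:
  fixes \<theta> \<phi> \<rho> D :: real
  assumes "\<bar>\<theta>\<bar> = \<rho>" "\<bar>\<phi>\<bar> \<le> \<rho>" "\<bar>\<theta> - \<phi>\<bar> = D"
  shows "\<exists>\<delta>. \<bar>\<delta>\<bar> = 1 \<and> \<theta> = \<delta> * \<rho> \<and> \<phi> = \<delta> * (\<rho> - D) \<and> \<theta> - \<phi> = \<delta> * D"
proof (cases "\<theta> \<ge> 0")
  case True
  then show ?thesis using assms by (intro exI[of _ 1]) auto
next
  case False
  then show ?thesis using assms by (intro exI[of _ "-1"]) auto
qed

lemma sin_collinear_signs:
  fixes \<theta> \<phi> \<rho> D :: real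
  assumes \<rho>: "0 < \<rho>" "\<rho> \<le> pi / 2" and D: "0 < D" "D < pi"
    and cos_\<theta>: "cos \<theta> = cos \<rho>" and cos_\<phi>: "cos \<rho> \<le> cos \<phi>" and cos_\<theta>\<phi>: "cos (\<theta> - \<phi>) = cos D"
  shows "\<exists>\<delta>. \<bar>\<delta>\<bar> = 1 \<and> sin \<theta> = \<delta> * sin \<rho> \<and> sin \<phi> = \<delta> * sin (\<rho> - D)
           \<and> sin (\<theta> - \<phi>) = \<delta> * sin D"
proof -
  have cos_\<phi>_eq: "cos \<phi> = cos \<rho> * cos D + sin \<theta> * sin (\<theta> - \<phi>)"
    using cos_diff[of \<theta> "\<theta> - \<phi>"] cos_\<theta> cos_\<theta>\<phi> by simp
  have sin_\<phi>_eq: "sin \<phi> = sin \<theta> * cos D - cos \<rho> * sin (\<theta> - \<phi>)"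
    using sin_diff[of \<theta> "\<theta> - \<phi>"] cos_\<theta> cos_\<theta>\<phi> by simp
  have sin_\<theta>: "sin \<theta> = sin \<rho> \<or> sin \<theta> = - sin \<rho>"
    using cos_\<theta> by (metis power2_eq_iff sin_squared_eq)
  have sin_\<theta>\<phi>: "sin (\<theta> - \<phi>) = sin D \<or> sin (\<theta> - \<phi>) = - sin D"
    using cos_\<theta>\<phi> by (metis power2_eq_iff sin_squared_eq)
  have "cos \<rho> - cos (\<rho> + D) = 2 * sin (\<rho> + D / 2) * sin (D / 2)"
    by (simp add: cos_diff_cos add_divide_distrib)
  also have "\<dots> > 0" using \<rho> D by (simp add: sin_gt_zero)
  finally have "cos (\<rho> + D) < cos \<rho>" by simp
  \<comment> \<open>this is where \<open>\<rho> \<le> pi / 2\<close> is used: if \<open>sin \<theta>\<close> and \<open>sin (\<theta> - \<phi>)\<close> had opposite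
    signs, then \<open>cos \<phi> = cos (\<rho> + D)\<close>\<close>
  then have same_sign: "sin (\<theta> - \<phi>) = (if sin \<theta> = sin \<rho> then sin D else - sin D)"
    using sin_\<theta> sin_\<theta>\<phi> cos_\<phi> cos_\<phi>_eq by (auto simp: cos_add split: if_splits)
  show ?thesis
  proof (cases "sin \<theta> = sin \<rho>")
    case True
    then show ?thesis using same_sign sin_\<phi>_eq by (intro exI[of _ 1]) (simp add: sin_diff[of \<rho> D])
  next
    case False
    then show ?thesis using same_sign sin_\<theta> sin_\<phi>_eq
      by (intro exI[of _ "-1"]) (simp add: sin_diff[of \<rho> D])
  qed
qed

lemma m_k_collinear_signs:
  fixes \<theta> \<phi> r D :: real
  assumes r: "0 < r" "k > 0 \<Longrightarrow> r \<le> pi / (2 * sqrt k)"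
    and D: "0 < D" "k > 0 \<Longrightarrow> D < pi / sqrt k"
    and m_\<theta>: "m_k k \<theta> = m_k k r" and m_\<phi>: "m_k k \<phi> \<le> m_k k r"
    and m_\<theta>\<phi>: "m_k k (\<theta> - \<phi>) = m_k k D"
  shows "\<exists>\<delta>. \<bar>\<delta>\<bar> = 1 \<and> deriv (m_k k) \<theta> = \<delta> * deriv (m_k k) r
           \<and> deriv (m_k k) \<phi> = \<delta> * deriv (m_k k) (r - D)
           \<and> deriv (m_k k) (\<theta> - \<phi>) = \<delta> * deriv (m_k k) D"
proof (cases k "0::real" rule: linorder_cases)
  case less
  define s where "s = sqrt (- k)"
  have s: "s > 0" using less by (simp add: s_def)
  have m: "m_k k = (\<lambda>t. (cosh (s * t) - 1) / (- k))" and m': "deriv (m_k k) = (\<lambda>t. sinh (s * t) / s)"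
    using less by (auto simp: m_k_def deriv_m_k s_def)
  have "cosh (s * \<theta>) = cosh (s * r)" "cosh (s * \<phi>) \<le> cosh (s * r)" "cosh (s * (\<theta> - \<phi>)) = cosh (s * D)"
    using m_\<theta> m_\<phi> m_\<theta>\<phi> less by (simp_all add: m divide_le_cancel)
  moreover have "cosh (s * \<phi>) = cosh (s * \<bar>\<phi>\<bar>)"
    using s cosh_real_abs[of "s * \<phi>"] by (simp add: abs_mult)
  ultimately have "\<bar>\<theta>\<bar> = r" "\<bar>\<phi>\<bar> \<le> r" "\<bar>\<theta> - \<phi>\<bar> = D"
    using s r D by (simp_all add: abs_mult cosh_real_nonneg_le_iff)
  then obtain \<delta> where \<delta>: "\<bar>\<delta>\<bar> = 1" "\<theta> = \<delta> * r" "\<phi> = \<delta> * (r - D)" "\<theta> - \<phi> = \<delta> * D"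
    using abs_collinear_signs by blast
  have "sinh (s * (\<delta> * t)) = \<delta> * sinh (s * t)" for t
    using \<delta>(1) by (cases "\<delta> = 1") (auto simp: abs_if split: if_splits)
  then show ?thesis using \<delta> by (intro exI[of _ \<delta>]) (simp add: m')
next
  case equal
  then have "\<theta>\<^sup>2 = r\<^sup>2" "\<phi>\<^sup>2 \<le> r\<^sup>2" "(\<theta> - \<phi>)\<^sup>2 = D\<^sup>2"
    using m_\<theta> m_\<phi> m_\<theta>\<phi> by (simp_all add: m_k_def)
  then have "\<bar>\<theta>\<bar> = r" "\<bar>\<phi>\<bar> \<le> r" "\<bar>\<theta> - \<phi>\<bar> = D"
    using r D by (auto simp flip: abs_le_square_iff)
      (metis abs_ge_zero less_imp_le power2_abs power2_eq_iff_nonneg)+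
  then obtain \<delta> where "\<bar>\<delta>\<bar> = 1" "\<theta> = \<delta> * r" "\<phi> = \<delta> * (r - D)" "\<theta> - \<phi> = \<delta> * D"
    using abs_collinear_signs by blast
  then show ?thesis using equal by (intro exI[of _ \<delta>]) (simp add: deriv_m_k)
next
  case greater
  define s where "s = sqrt k"
  have s: "s > 0" using greater by (simp add: s_def)
  have m: "m_k k = (\<lambda>t. (1 - cos (s * t)) / k)" and m': "deriv (m_k k) = (\<lambda>t. sin (s * t) / s)"
    using greater by (auto simp: m_k_def deriv_m_k s_def)
  have "cos (s * \<theta>) = cos (s * r)" "cos (s * r) \<le> cos (s * \<phi>)" "cos (s * \<theta> - s * \<phi>) = cos (s * D)"
    using m_\<theta> m_\<phi> m_\<theta>\<phi> greater by (simp_all add: m divide_le_cancel right_diff_distrib)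
  moreover have "s * r \<le> pi / 2" "s * D < pi"
    using r(2) D(2) greater s by (simp_all add: s_def field_simps)
  ultimately obtain \<delta> where \<delta>: "\<bar>\<delta>\<bar> = 1" "sin (s * \<theta>) = \<delta> * sin (s * r)"
    "sin (s * \<phi>) = \<delta> * sin (s * r - s * D)" "sin (s * \<theta> - s * \<phi>) = \<delta> * sin (s * D)"
    using sin_collinear_signs[of "s * r" "s * D" "s * \<theta>" "s * \<phi>"] r(1) D(1) s by auto
  then show ?thesis by (intro exI[of _ \<delta>]) (simp add: m' right_diff_distrib)
qed

lemma sf_geodesic_center_relation:
  fixes c p q :: "(real^'n) \<times> real"
  assumes r: "0 < r" "k > 0 \<Longrightarrow> r \<le> pi / (2 * sqrt k)"
    and c: "c \<in> space_form k" and p: "p \<in> space_form k" and q: "q \<in> space_form k"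
    and p_disk: "sf_dist k c p \<le> r" and q_bdry: "sf_dist k c q = r"
    and \<gamma>: "sf_geodesic k \<gamma>" "c = \<gamma> a" "p = \<gamma> b" "q = \<gamma> e"
    and "p \<noteq> q" and not_antipodal: "k > 0 \<Longrightarrow> sf_dist k p q \<noteq> pi / sqrt k"
  defines "D \<equiv> sf_dist k p q"
  shows "p - (deriv (m_k k) (r - D) / deriv (m_k k) r) *\<^sub>R q
           = (deriv (m_k k) D / deriv (m_k k) r) *\<^sub>R c"
    and "deriv (m_k k) D / deriv (m_k k) r > 0"
proof -
  have r_lt_diam: "k > 0 \<Longrightarrow> r < pi / sqrt k" using r less_diameter_if_le_half by blast
  have "m_k k r < m_k k (sf_dist k c p) \<longleftrightarrow> r < sf_dist k c p"
    using r(1) sf_dist_nonneg[OF c p] sf_dist_le_diameter[OF _ c p] r_lt_diam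
    by (intro m_k_less_iff) (auto intro: less_imp_le)
  then have "m_k k (sf_dist k c p) \<le> m_k k r" using p_disk by auto
  then have m_\<phi>: "m_k k (b - a) \<le> m_k k r"
    using m_k_sf_dist_geodesic[OF \<gamma>(1)] \<gamma> by simp
  have m_\<theta>: "m_k k (e - a) = m_k k r"
    using m_k_sf_dist_geodesic[OF \<gamma>(1)] \<gamma> q_bdry by metis
  have m_\<theta>\<phi>: "m_k k ((e - a) - (b - a)) = m_k k D"
    using m_k_sf_dist_geodesic[OF \<gamma>(1)] \<gamma> by (simp add: D_def)
  have "0 < m_k k D" using m_k_sf_dist_pos[OF p q \<open>p \<noteq> q\<close>] by (simp add: D_def)
  then have "D \<noteq> 0" by (metis less_irrefl m_k_0)
  then have D_pos: "0 < D" using sf_dist_nonneg[OF p q] by (simp add: D_def)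
  have D_lt: "k > 0 \<Longrightarrow> D < pi / sqrt k"
    using sf_dist_le_diameter[OF _ p q] not_antipodal by (force simp: D_def)
  obtain \<delta> where \<delta>: "\<bar>\<delta>\<bar> = 1" "deriv (m_k k) (e - a) = \<delta> * deriv (m_k k) r"
    "deriv (m_k k) (b - a) = \<delta> * deriv (m_k k) (r - D)"
    "deriv (m_k k) ((e - a) - (b - a)) = \<delta> * deriv (m_k k) D"
    using m_k_collinear_signs[OF r D_pos D_lt m_\<theta> m_\<phi> m_\<theta>\<phi>] by blast
  have m'_r: "deriv (m_k k) r > 0" using deriv_m_k_pos[OF r(1) r_lt_diam] .
  show "p - (deriv (m_k k) (r - D) / deriv (m_k k) r) *\<^sub>R q
      = (deriv (m_k k) D / deriv (m_k k) r) *\<^sub>R c"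
    using sf_geodesic_three_points_normalized[OF \<gamma>(1) \<delta> m'_r] \<gamma> by simp
  show "deriv (m_k k) D / deriv (m_k k) r > 0"
    using deriv_m_k_pos[OF D_pos D_lt] m'_r by simp
qed

lemma sf_dist_center_sign_pattern:
  fixes F :: "(real^'n) \<times> real \<Rightarrow> real" and c q :: "(real^'n) \<times> real"
  assumes "\<mu> > 0" and c: "c \<in> space_form k" and q: "q \<in> space_form k"
    and q_bdry: "sf_dist k c q = r" and r_le: "k > 0 \<Longrightarrow> r \<le> pi / sqrt k"
    and F: "\<And>x. x \<in> space_form k \<Longrightarrow> x \<noteq> q \<Longrightarrow>
      F x - R = \<mu> * (m_k k (sf_dist k c x) - m_k k r) / m_k k (sf_dist k q x)"
  shows "(\<forall>x\<in>space_form k. sf_dist k c x = r \<and> x \<noteq> q \<longrightarrow> F x = R)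
       \<and> (\<forall>x\<in>space_form k. sf_dist k c x < r \<longrightarrow> F x < R)
       \<and> (\<forall>x\<in>space_form k. sf_dist k c x > r \<longrightarrow> R < F x)"
proof -
  have r: "0 \<le> r" using sf_dist_nonneg[OF c q] q_bdry by simp
  have compare: "m_k k s < m_k k t \<longleftrightarrow> s < t"
    if "s \<in> {r, sf_dist k c x}" "t \<in> {r, sf_dist k c x}" "x \<in> space_form k" for s t x
    using that r r_le sf_dist_nonneg[OF c that(3)] sf_dist_le_diameter[OF _ c that(3)]
    by (intro m_k_less_iff) auto
  have quotient: "F x - R = \<mu> * (m_k k (sf_dist k c x) - m_k k r) / m_k k (sf_dist k q x)"
    and denominator_pos: "m_k k (sf_dist k q x) > 0"
    if "x \<in> space_form k" "sf_dist k c x \<noteq> r" for x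
  proof -
    have "x \<noteq> q" using that(2) q_bdry by auto
    then show "F x - R = \<mu> * (m_k k (sf_dist k c x) - m_k k r) / m_k k (sf_dist k q x)"
      and "m_k k (sf_dist k q x) > 0"
      using F[OF that(1)] m_k_sf_dist_pos[OF q that(1)] by auto
  qed
  show ?thesis
  proof (intro conjI ballI impI)
    fix x assume "x \<in> space_form k" "sf_dist k c x = r \<and> x \<noteq> q"
    then have "F x - R = 0" using F by simp
    then show "F x = R" by simp
  next
    fix x assume x: "x \<in> space_form k" and "sf_dist k c x < r"
    then have "m_k k (sf_dist k c x) - m_k k r < 0" using compare by auto
    then have "\<mu> * (m_k k (sf_dist k c x) - m_k k r) / m_k k (sf_dist k q x) < 0"
      using denominator_pos[OF x] \<open>\<mu> > 0\<close> \<open>sf_dist k c x < r\<close>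
      by (intro divide_neg_pos mult_pos_neg) auto
    then show "F x < R" using quotient[OF x] \<open>sf_dist k c x < r\<close> by simp
  next
    fix x assume x: "x \<in> space_form k" and "sf_dist k c x > r"
    then have "m_k k (sf_dist k c x) - m_k k r > 0" using compare by auto
    then have "\<mu> * (m_k k (sf_dist k c x) - m_k k r) / m_k k (sf_dist k q x) > 0"
      using denominator_pos[OF x] \<open>\<mu> > 0\<close> \<open>sf_dist k c x > r\<close> by simp
    then show "R < F x" using quotient[OF x] \<open>sf_dist k c x > r\<close> by simp
  qed
qed

theorem proposition3:
  fixes k r :: real and c p q :: "(real^'n) \<times> real"
  assumes r_pos: "r > 0"
    and r_le: "k > 0 \<longrightarrow> r \<le> pi / (2 * sqrt k)"
    and c_in: "c \<in> space_form k"
    and p_in: "p \<in> space_form k"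
    and q_in: "q \<in> space_form k"
    and p_disk: "sf_dist k c p \<le> r"
    and q_bdry: "sf_dist k c q = r"
    and geod: "\<exists>\<gamma>. sf_geodesic k \<gamma> \<and> c \<in> range \<gamma> \<and> p \<in> range \<gamma> \<and> q \<in> range \<gamma>"
    and p_ne_q: "p \<noteq> q"
    and not_antipodal: "\<not> (k > 0 \<and> sf_dist k p q = pi / sqrt k)"
  defines "f \<equiv> (\<lambda>x. (m_k k (sf_dist k p x) - m_k k (sf_dist k p q)) / m_k k (sf_dist k q x))"
    and "R \<equiv> deriv (m_k k) (r - sf_dist k p q) / deriv (m_k k) r"
  shows "(\<forall>x\<in>space_form k. sf_dist k c x = r \<and> x \<noteq> q \<longrightarrow> f x = R)
       \<and> (\<forall>x\<in>space_form k. sf_dist k c x < r \<longrightarrow> f x < R)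
       \<and> (\<forall>x\<in>space_form k. sf_dist k c x > r \<longrightarrow> R < f x)"
proof -
  obtain \<gamma> a b e where \<gamma>: "sf_geodesic k \<gamma>" "c = \<gamma> a" "p = \<gamma> b" "q = \<gamma> e"
    using geod by blast
  define \<mu> where "\<mu> = deriv (m_k k) (sf_dist k p q) / deriv (m_k k) r"
  have relation: "p - R *\<^sub>R q = \<mu> *\<^sub>R c" and "\<mu> > 0"
    using sf_geodesic_center_relation[OF r_pos _ c_in p_in q_in p_disk q_bdry \<gamma> p_ne_q] r_le
      not_antipodal unfolding R_def \<mu>_def by auto
  have "k = 0 \<Longrightarrow> \<mu> = 1 - R"
    using r_pos by (simp add: R_def \<mu>_def deriv_m_k diff_divide_distrib)
  then have "f x - R = \<mu> * (m_k k (sf_dist k c x) - m_k k r) / m_k k (sf_dist k q x)"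
    if "x \<in> space_form k" "x \<noteq> q" for x
    using m_k_sf_dist_combination[OF p_in q_in c_in that(1) relation]
      m_k_sf_dist_pos[OF q_in that(1) not_sym[OF that(2)]]
    by (simp add: f_def q_bdry field_simps)
  moreover have "k > 0 \<Longrightarrow> r \<le> pi / sqrt k"
    using r_pos r_le less_diameter_if_le_half by (blast intro: less_imp_le)
  ultimately show ?thesis
    using sf_dist_center_sign_pattern[OF \<open>\<mu> > 0\<close> c_in q_in q_bdry] by blast
qed

end
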